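(* Let $r\ge2$ and let $\lambda$ be a partition of length $r$ with degree sequence $(n_1,n_2,\dots,n_r)$ (increasing). Let $\mu_1$ be the partition with degree sequence $(n_1,\dots,n_{r-1})$ and $\mu_2$ the partition with degree sequence $(n_1,\dots,n_{r-2},n_r)$. If $R_{\mu_1}(x)$ is irreducible (non-constant and irreducible over $\mathbb{Q}$) and $R_{\mu_1}(x)$ divides $R_\lambda(x)$, then $R_{\mu_1}(x)$ divides $R_{\mu_2}(x)$.
   Context: $\mathrm{He}_k(x)$ denotes the monic probabilists' Hermite polynomial of degree $k$. A partition $\lambda=(\lambda_1\ge\dots\ge\lambda_r\ge0)$ may have zero parts; its degree sequence is $n_\lambda=(\lambda_r,\lambda_{r-1}+1,\dots,\lambda_1+r-1)$, and any set of $r$ distinct non-negative integers is the degree sequence of exactly one partition of length $r$. $\mathrm{He}_\lambda=\mathrm{Wr}[\mathrm{He}_{n_1},\dots,\mathrm{He}_{n_r}]/\prod_{i<j}(n_j-n_i)$. Removing a $2$-hook means replacing an entry $a$ of $n_\lambda$ by $a-2\ge0$ with $a-2\notin n_\lambda$; removing $2$-hooks until impossible yields the $2$-core $\bar\lambda$, and $\mathrm{He}_\lambda(x)=x^{|\bar\lambda|}R_\lambda(x)$ with $R_\lambda\in\mathbb{Z}[x]$, $R_\lambda(0)\ne0$. *)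

theory Defs
  imports "HOL-Computational_Algebra.Polynomial" "Jordan_Normal_Form.Determinant"
begin

text \<open>Monic probabilists' Hermite polynomials He_k, via He_{k+2} = x He_{k+1} - (k+1) He_k.\<close>
fun herm :: "nat \<Rightarrow> rat poly" where
  "herm 0 = 1"
| "herm (Suc 0) = [:0, 1:]"
| "herm (Suc (Suc k)) = [:0, 1:] * herm (Suc k) - smult (of_nat (Suc k)) (herm k)"

definition wronskian :: "rat poly list \<Rightarrow> rat poly" where
  "wronskian fs = det (mat (length fs) (length fs) (\<lambda>(i, j). (pderiv ^^ i) (fs ! j)))"

text \<open>Generalised Hermite polynomial He_lambda, where the partition lambda is given by its
  (strictly increasing) degree sequence ns = (n_1,...,n_r).\<close>
definition hermP :: "nat list \<Rightarrow> rat poly" where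
  "hermP ns = smult (inverse (\<Prod>(i, j) \<in> {(i, j). i < j \<and> j < length ns}.
                                 of_nat (ns ! j - ns ! i)))
                    (wronskian (map herm ns))"

text \<open>Removing a 2-hook, on degree sequences viewed as finite sets of naturals.\<close>
definition remove_2hook :: "nat set \<Rightarrow> nat set \<Rightarrow> bool" where
  "remove_2hook N M \<longleftrightarrow> (\<exists>a \<in> N. 2 \<le> a \<and> a - 2 \<notin> N \<and> M = insert (a - 2) (N - {a}))"

definition two_core :: "nat set \<Rightarrow> nat set" where
  "two_core N = (SOME M. remove_2hook\<^sup>*\<^sup>* N M \<and> (\<nexists>M'. remove_2hook M M'))"

definition part_size :: "nat set \<Rightarrow> nat" where
  "part_size N = \<Sum>N - card N * (card N - 1) div 2"

definition hermR :: "nat list \<Rightarrow> rat poly" where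
  "hermR ns = hermP ns div [:0, 1:] ^ part_size (two_core (set ns))"

end

theory Submission
  imports Defs "HOL-Computational_Algebra.Polynomial_Factorial" "HOL-Computational_Algebra.Field_as_Ring"
begin

text \<open>The Wronskians of Hermite polynomials satisfy the Desnanot--Jacobi identity
  \<open>W(F) W(F,a,b) = W(F,a) W(F,b)' - W(F,a)' W(F,b)\<close>, and each of them is a nonzero constant
  times \<open>x\<^sup>k R\<close> with \<open>R(0) \<noteq> 0\<close>. The exact order \<open>k\<close> of vanishing at \<open>0\<close> is found by replacing,
  within each parity class, the \<open>He\<^sub>n\<close> by combinations with lowest terms \<open>x\<^sup>q, x\<^bsup>q+2\<^esup>, \<dots>\<close>;
  the lowest coefficient of their Wronskian is a determinant of falling factorials, which is
  nonzero, and the order agrees with the size of the 2-core.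
  If the irreducible \<open>p = R(F,a)\<close> divides \<open>R(F,a,b)\<close>, the identity gives
  \<open>p | W(F,a)' W(F,b)\<close>; since \<open>p\<close> is squarefree and prime to \<open>x\<close> it cannot divide
  \<open>W(F,a)' = c (x\<^sup>k p)'\<close>, so \<open>p | R(F,b)\<close>.\<close>

section \<open>Hermite polynomials\<close>

lemma pderiv_herm: "pderiv (herm (Suc n)) = smult (of_nat (Suc n)) (herm n)"
proof (induction n rule: herm.induct)
  case 1
  then show ?case by (simp add: pderiv_pCons)
next
  case 2
  then show ?case by (simp add: pderiv_pCons pderiv_mult pderiv_diff numeral_2_eq_2)
next
  case (3 k)
  have "pderiv (herm (Suc (Suc (Suc k)))) =
     herm (Suc (Suc k)) + [:0,1:] * pderiv (herm (Suc (Suc k)))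
       - smult (of_nat (Suc (Suc k))) (pderiv (herm (Suc k)))"
    by (simp only: herm.simps pderiv_diff pderiv_mult pderiv_smult) (simp add: pderiv_pCons)
  also have "\<dots> = herm (Suc (Suc k))
      + smult (of_nat (Suc (Suc k))) ([:0,1:] * herm (Suc k) - smult (of_nat (Suc k)) (herm k))"
    using 3 by (simp add: algebra_simps smult_diff_right)
  also have "\<dots> = smult (of_nat (Suc (Suc (Suc k)))) (herm (Suc (Suc k)))"
    by (simp only: herm.simps(3) of_nat_Suc smult_add_left smult_one) simp
  finally show ?case .
qed

lemma coeff_herm_eq_0_if_odd: "odd (n + s) \<Longrightarrow> coeff (herm n) s = 0"
proof (induction n arbitrary: s rule: herm.induct)
  case 1
  then show ?case by (cases s) auto
next
  case 2
  then show ?case by (cases s; cases "s - 1") auto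
next
  case (3 k)
  then show ?case by (cases s) auto
qed

lemma coeff_herm_even_0_nonzero: "coeff (herm (2 * m)) 0 \<noteq> 0"
  by (induction m) simp_all

lemma coeff_herm_lowest_nonzero: "coeff (herm n) (n mod 2) \<noteq> 0"
proof (cases "even n")
  case True
  then show ?thesis using coeff_herm_even_0_nonzero by (auto elim: evenE)
next
  case False
  then obtain m where m: "n = Suc (2 * m)" by (metis oddE Suc_eq_plus1)
  have "coeff (herm n) 1 = coeff (pderiv (herm n)) 0"
    by (simp add: coeff_pderiv)
  also have "\<dots> = of_nat n * coeff (herm (2 * m)) 0"
    unfolding m pderiv_herm by simp
  finally show ?thesis using coeff_herm_even_0_nonzero[of m] m by simp
qed

definition hermite_op :: "'a::idom poly \<Rightarrow> 'a poly" where
  "hermite_op p = pderiv (pderiv p) - [:0,1:] * pderiv p"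

lemma hermite_op_herm: "hermite_op (herm n) = - smult (of_nat n) (herm n)"
proof (cases n)
  case (Suc m)
  show ?thesis
  proof (cases m)
    case 0
    then show ?thesis using Suc by (simp add: hermite_op_def pderiv_pCons)
  next
    case (Suc k)
    have d1: "pderiv (herm n) = smult (of_nat n) (herm m)"
      using \<open>n = Suc m\<close> by (simp only: pderiv_herm)
    have d2: "pderiv (herm m) = smult (of_nat m) (herm k)"
      using Suc by (simp only: pderiv_herm)
    have rec: "[:0,1:] * herm m = herm n + smult (of_nat m) (herm k)"
      using \<open>n = Suc m\<close> Suc by simp
    show ?thesis
      unfolding hermite_op_def d1 pderiv_smult d2 mult_smult_right rec
      by (simp add: smult_add_right)
  qed
qed (simp add: hermite_op_def)

lemma pderiv_sum: "pderiv (sum f A) = (\<Sum>x\<in>A. pderiv (f x))"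
  using higher_pderiv_sum[of 1] by simp

lemma smult_sum_right: "smult a (sum f A) = (\<Sum>x\<in>A. smult a (f x))"
  by (rule poly_eqI) (simp add: coeff_sum sum_distrib_left)

lemma hermite_op_sum: "hermite_op (sum f A) = (\<Sum>x\<in>A. hermite_op (f x))"
  unfolding hermite_op_def pderiv_sum by (simp add: sum_subtractf sum_distrib_left)

lemma hermite_op_smult: "hermite_op (smult a p) = smult a (hermite_op p)"
  unfolding hermite_op_def by (simp add: pderiv_smult smult_diff_right)

lemma monom_dvd_pderiv: "monom 1 (Suc k) dvd p \<Longrightarrow> monom 1 k dvd pderiv p"
  unfolding monom_1_dvd_iff' by (simp add: coeff_pderiv)

lemma monom_dvd_hermite_op:
  assumes "monom 1 (Suc (Suc k)) dvd p"
  shows "monom 1 k dvd hermite_op p"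
proof -
  have 1: "monom 1 (Suc k) dvd pderiv p" using monom_dvd_pderiv[OF assms] .
  have "monom 1 k dvd monom 1 (Suc k)" by (simp add: monom_1_dvd_iff')
  with 1 have "monom 1 k dvd pderiv p" by (rule dvd_trans[rotated])
  with monom_dvd_pderiv[OF 1] show ?thesis
    unfolding hermite_op_def by (blast intro: dvd_diff dvd_mult)
qed

lemma hermite_op_shift_herm_combination:
  fixes c :: "'a \<Rightarrow> rat" and f :: "'a \<Rightarrow> nat" and A :: "'a set"
  defines "p \<equiv> \<Sum>k\<in>A. smult (c k) (herm (f k))"
  shows "hermite_op p + smult (of_nat n0) p
       = (\<Sum>k\<in>A. smult (c k * (of_nat n0 - of_nat (f k))) (herm (f k)))"
  unfolding p_def hermite_op_sum hermite_op_smult hermite_op_herm smult_sum_right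
    sum.distrib[symmetric]
  by (rule sum.cong) (simp_all add: algebra_simps flip: smult_add_left)

text \<open>Applying \<open>hermite_op + n\<^sub>0\<close> kills \<open>He\<^sub>n\<^sub>0\<close>, rescales every other \<open>He\<^sub>n\<close> by the nonzero
  factor \<open>n\<^sub>0 - n\<close> and lowers the order of vanishing at \<open>0\<close> by at most \<open>2\<close>.\<close>
lemma herm_combination_coeffs_eq_0:
  assumes "distinct ns" "\<forall>n\<in>set ns. n mod 2 = q"
    and "monom 1 (2 * length ns + q) dvd (\<Sum>k<length ns. smult (c k) (herm (ns ! k)))"
  shows "\<forall>k<length ns. c k = 0"
  using assms
proof (induction ns arbitrary: c)
  case (Cons n0 ns)
  let ?v = "\<Sum>k<length (n0 # ns). smult (c k) (herm ((n0 # ns) ! k))"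
  let ?w = "\<Sum>k<length ns. smult (c (Suc k)) (herm (ns ! k))"
  have v: "?v = smult (c 0) (herm n0) + ?w"
    by (simp only: length_Cons sum.lessThan_Suc_shift) simp
  have dvd_v: "monom 1 (Suc (Suc (2 * length ns + q))) dvd ?v"
    using Cons.prems(3) by simp
  have "hermite_op ?v + smult (of_nat n0) ?v = (\<Sum>k<length (n0 # ns).
      smult (c k * (of_nat n0 - of_nat ((n0 # ns) ! k))) (herm ((n0 # ns) ! k)))"
    by (rule hermite_op_shift_herm_combination)
  also have "\<dots>
      = (\<Sum>k<length ns. smult (c (Suc k) * (of_nat n0 - of_nat (ns ! k))) (herm (ns ! k)))"
    by (simp only: length_Cons sum.lessThan_Suc_shift) simp
  moreover have "monom 1 (2 * length ns + q) dvd ?v"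
    using dvd_v by (meson dvd_trans monom_1_dvd_iff' less_Suc_eq)
  then have "monom 1 (2 * length ns + q) dvd hermite_op ?v + smult (of_nat n0) ?v"
    using monom_dvd_hermite_op[OF dvd_v] by (simp add: dvd_smult)
  ultimately have "\<forall>k<length ns. c (Suc k) * (of_nat n0 - of_nat (ns ! k)) = 0"
    using Cons.IH[of "\<lambda>k. c (Suc k) * (of_nat n0 - of_nat (ns ! k))"] Cons.prems(1,2) by simp
  then have rest: "\<forall>k<length ns. c (Suc k) = 0"
    using Cons.prems(1) by (auto simp: in_set_conv_nth)
  then have "?v = smult (c 0) (herm n0)" using v by simp
  then have "coeff (smult (c 0) (herm n0)) q = 0"
    using dvd_v unfolding monom_1_dvd_iff' by simp
  then have "c 0 = 0" using coeff_herm_lowest_nonzero[of n0] Cons.prems(2) by simp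
  with rest show ?case by (auto simp: less_Suc_eq_0_disj)
qed simp

section \<open>Wronskians and the Desnanot--Jacobi identity\<close>

definition wronskian_mat :: "rat poly list \<Rightarrow> rat poly mat" where
  "wronskian_mat fs = mat (length fs) (length fs) (\<lambda>(i,j). (pderiv ^^ i) (fs ! j))"

lemma wronskian_eq_det: "wronskian fs = det (wronskian_mat fs)"
  by (simp add: wronskian_def wronskian_mat_def)

lemma wronskian_mat_carrier: "wronskian_mat fs \<in> carrier_mat (length fs) (length fs)"
  by (simp add: wronskian_mat_def)

lemma wronskian_lincomb:
  assumes len: "length fs = r"
  shows "wronskian (map (\<lambda>j. \<Sum>k<r. smult (C k j) (fs!k)) [0..<r])
       = smult (det (mat r r (\<lambda>(k,j). C k j))) (wronskian fs)"
proof -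
  interpret const_hom: comm_ring_hom "\<lambda>a::rat. [:a:]"
    by unfold_locales (simp_all add: one_pCons)
  let ?gs = "map (\<lambda>j. \<Sum>k<r. smult (C k j) (fs!k)) [0..<r]"
  let ?C = "mat r r (\<lambda>(k,j). C k j)"
  let ?B = "map_mat (\<lambda>a. [:a:]) ?C"
  have "wronskian_mat ?gs = wronskian_mat fs * ?B"
  proof (rule eq_matI)
    fix i j assume "i < dim_row (wronskian_mat fs * ?B)" "j < dim_col (wronskian_mat fs * ?B)"
    then have i: "i < r" and j: "j < r" using len by (auto simp: wronskian_mat_def)
    have "(wronskian_mat fs * ?B) $$ (i,j) = (\<Sum>k<r. (pderiv ^^ i) (fs!k) * [:C k j:])"
      using i j len
      by (simp add: wronskian_mat_def scalar_prod_def Matrix.row_def Matrix.col_def lessThan_atLeast0)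
    also have "\<dots> = (pderiv ^^ i) (\<Sum>k<r. smult (C k j) (fs!k))"
      unfolding higher_pderiv_sum higher_pderiv_smult by (rule sum.cong) (auto simp: mult.commute)
    also have "\<dots> = wronskian_mat ?gs $$ (i,j)" using i j by (simp add: wronskian_mat_def)
    finally show "wronskian_mat ?gs $$ (i,j) = (wronskian_mat fs * ?B) $$ (i,j)" by simp
  qed (use len in \<open>auto simp: wronskian_mat_def\<close>)
  then have "wronskian ?gs = det (wronskian_mat fs) * det ?B"
    unfolding wronskian_eq_det using det_mult[of "wronskian_mat fs" r ?B] len
    by (auto simp: wronskian_mat_def)
  then show ?thesis by (simp add: wronskian_eq_det mult.commute)
qed

lemma pderiv_signof_mult: "pderiv (signof p * (q :: 'a::idom poly)) = signof p * pderiv q"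
  by (simp add: of_int_poly pderiv_smult)

lemma pderiv_det:
  fixes A :: "'a::idom poly mat"
  assumes A: "A \<in> carrier_mat n n"
  shows "pderiv (det A) =
    (\<Sum>i0<n. det (mat n n (\<lambda>(i,j). if i = i0 then pderiv (A $$ (i,j)) else A $$ (i,j))))"
proof -
  define P where "P = {p. p permutes {0..<n}}"
  define B where "B i0 = mat n n (\<lambda>(i,j). if i = i0 then pderiv (A$$(i,j)) else A$$(i,j))" for i0
  have pn: "p i < n" if "p \<in> P" "i < n" for p i
    using that unfolding P_def by (simp add: permutes_in_image)
  have "pderiv (det A) = (\<Sum>p\<in>P. signof p * pderiv (\<Prod>i\<in>{0..<n}. A $$ (i, p i)))"
    unfolding det_def'[OF A] P_def pderiv_sum by (simp only: pderiv_signof_mult)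
  also have "\<dots> = (\<Sum>p\<in>P. \<Sum>i0<n. signof p * (\<Prod>i\<in>{0..<n}. B i0 $$ (i, p i)))"
  proof (rule sum.cong, simp)
    fix p assume p: "p \<in> P"
    have "pderiv (\<Prod>i\<in>{0..<n}. A $$ (i, p i))
        = (\<Sum>i0\<in>{0..<n}. (\<Prod>i\<in>{0..<n} - {i0}. A $$ (i, p i)) * pderiv (A $$ (i0, p i0)))"
      by (rule pderiv_prod)
    also have "\<dots> = (\<Sum>i0<n. (\<Prod>i\<in>{0..<n}. B i0 $$ (i, p i)))"
    proof (rule sum.cong, simp add: atLeast0LessThan)
      fix i0 assume i0: "i0 \<in> {..<n}"
      have "(\<Prod>i\<in>{0..<n}. B i0 $$ (i, p i))
          = B i0 $$ (i0, p i0) * (\<Prod>i\<in>{0..<n} - {i0}. B i0 $$ (i, p i))"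
        using i0 by (subst prod.remove[of _ i0]) auto
      also have "\<dots> = pderiv (A $$ (i0, p i0)) * (\<Prod>i\<in>{0..<n} - {i0}. A $$ (i, p i))"
        using i0 pn[OF p] by (auto simp: B_def intro!: prod.cong)
      finally show "(\<Prod>i\<in>{0..<n} - {i0}. A $$ (i, p i)) * pderiv (A $$ (i0, p i0))
          = (\<Prod>i\<in>{0..<n}. B i0 $$ (i, p i))"
        by (simp add: mult.commute)
    qed
    finally show "signof p * pderiv (\<Prod>i\<in>{0..<n}. A $$ (i, p i))
        = (\<Sum>i0<n. signof p * (\<Prod>i\<in>{0..<n}. B i0 $$ (i, p i)))"
      by (simp add: sum_distrib_left)
  qed
  also have "\<dots> = (\<Sum>i0<n. \<Sum>p\<in>P. signof p * (\<Prod>i\<in>{0..<n}. B i0 $$ (i, p i)))"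
    by (rule sum.swap)
  also have "\<dots> = (\<Sum>i0<n. det (B i0))"
    unfolding P_def by (rule sum.cong, simp, subst det_def'[of _ n]) (auto simp: B_def)
  finally show ?thesis unfolding B_def .
qed

definition wronskian_deriv_mat :: "rat poly list \<Rightarrow> rat poly mat" where
  "wronskian_deriv_mat fs = mat (length fs) (length fs)
     (\<lambda>(i,j). (pderiv ^^ (if i = length fs - 1 then length fs else i)) (fs ! j))"

text \<open>Differentiating any row but the last produces two equal rows.\<close>
lemma pderiv_wronskian:
  assumes "fs \<noteq> []"
  shows "pderiv (wronskian fs) = det (wronskian_deriv_mat fs)"
proof -
  define k where "k = length fs"
  have k: "k = Suc (k - 1)" using assms k_def by simp
  define B where "B i0 = mat k k (\<lambda>(i,j). if i = i0 then pderiv (wronskian_mat fs $$ (i,j))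
                                           else wronskian_mat fs $$ (i,j))" for i0
  have "pderiv (wronskian fs) = (\<Sum>i0<k. det (B i0))"
    unfolding wronskian_eq_det B_def k_def by (rule pderiv_det[OF wronskian_mat_carrier])
  also have "\<dots> = (\<Sum>i0<k-1. det (B i0)) + det (B (k-1))"
    by (subst k) (simp only: sum.lessThan_Suc)
  also have "(\<Sum>i0<k-1. det (B i0)) = 0"
  proof (rule sum.neutral, intro ballI)
    fix i0 assume i0: "i0 \<in> {..<k-1}"
    show "det (B i0) = 0"
    proof (rule det_identical_rows[of _ k i0 "Suc i0"])
      show "row (B i0) i0 = row (B i0) (Suc i0)"
        using i0 by (intro eq_vecI) (auto simp: B_def wronskian_mat_def k_def)
    qed (use i0 in \<open>auto simp: B_def\<close>)
  qed
  also have "pderiv ((pderiv ^^ (k-1)) p) = (pderiv ^^ k) p" for p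
    by (subst (2) k) simp
  then have "B (k-1) = wronskian_deriv_mat fs"
    by (intro eq_matI) (auto simp: B_def wronskian_mat_def wronskian_deriv_mat_def k_def)
  finally show ?thesis by simp
qed

lemma det_2x2:
  assumes B: "(B :: 'a :: comm_ring_1 mat) \<in> carrier_mat 2 2"
  shows "det B = B$$(0,0) * B$$(1,1) - B$$(0,1) * B$$(1,0)"
proof -
  have det1: "det C = C $$ (0,0)" if "(C :: 'a mat) \<in> carrier_mat 1 1" for C
    using that by (subst det_upper_triangular[of C 1]) (auto simp: upper_triangular_def diag_mat_def)
  have "det B = (\<Sum>i<2. B $$ (i,0) * cofactor B i 0)"
    using laplace_expansion_column[OF B, of 0] by simp
  also have "\<dots> = B $$ (0,0) * cofactor B 0 0 + B $$ (1,0) * cofactor B 1 0"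
    by (simp add: numeral_2_eq_2)
  also have "cofactor B 0 0 = B $$ (1,1)"
    unfolding cofactor_def using B by (subst det1) (auto simp: mat_delete_def)
  also have "cofactor B 1 0 = - B $$ (0,1)"
    unfolding cofactor_def using B by (subst det1) (auto simp: mat_delete_def)
  finally show ?thesis by (simp add: algebra_simps)
qed

lemma mult_adj_mat_trailing_columns:
  fixes A :: "'a :: comm_ring_1 mat"
  assumes A: "A \<in> carrier_mat n n"
  shows "A * mat n n (\<lambda>(i,j). if j < m then (if i = j then 1 else 0) else adj_mat A $$ (i,j))
       = mat n n (\<lambda>(i,j). if j < m then A $$ (i,j) else (if i = j then det A else 0))"
    (is "A * ?X = ?Y")
proof (rule eq_matI)
  fix i j assume "i < dim_row ?Y" "j < dim_col ?Y"
  then have i: "i < n" and j: "j < n" by auto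
  have e: "(A * ?X) $$ (i,j) = (\<Sum>k<n. A $$ (i,k) * ?X $$ (k,j))"
    using A i j by (simp add: scalar_prod_def Matrix.row_def Matrix.col_def lessThan_atLeast0)
  show "(A * ?X) $$ (i,j) = ?Y $$ (i,j)"
  proof (cases "j < m")
    case True
    have "(\<Sum>k<n. A $$ (i,k) * ?X $$ (k,j)) = (\<Sum>k<n. if k = j then A $$ (i,k) else 0)"
      by (rule sum.cong) (use True j in auto)
    then show ?thesis using e True i j by simp
  next
    case False
    have "(\<Sum>k<n. A $$ (i,k) * ?X $$ (k,j)) = (A * adj_mat A) $$ (i,j)"
      using A adj_mat(1)[OF A] False i j
      by (simp add: scalar_prod_def Matrix.row_def Matrix.col_def lessThan_atLeast0)
    then show ?thesis using e False i j adj_mat(2)[OF A] by simp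
  qed
qed (use A in auto)

text \<open>Jacobi's complementary minor theorem for the trailing \<open>2 \<times> 2\<close> block of the adjugate:
  compare determinants in \<open>A * X = Y\<close>, where \<open>X\<close> is the identity with its last two columns
  replaced by those of \<open>adj A\<close>, so that \<open>Y\<close> is block lower triangular.\<close>
lemma det_adj_trailing_block:
  fixes A :: "'a :: idom mat"
  assumes A: "A \<in> carrier_mat (m+2) (m+2)" and d: "det A \<noteq> 0"
  shows "det (mat 2 2 (\<lambda>(i,j). adj_mat A $$ (i+m, j+m)))
       = det A * det (mat m m (\<lambda>(i,j). A $$ (i,j)))"
proof -
  define n where "n = m + 2"
  define adj where "adj = adj_mat A"
  define X where "X = mat n n (\<lambda>(i,j). if j < m then (if i = j then 1 else 0) else adj $$ (i,j))"
  define Y where "Y = mat n n (\<lambda>(i,j). if j < m then A $$ (i,j) else (if i = j then det A else 0))"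
  have Xc: "X \<in> carrier_mat n n" unfolding X_def by simp
  have AX: "A * X = Y"
    unfolding X_def Y_def adj_def using A unfolding n_def by (rule mult_adj_mat_trailing_columns)
  define X4 where "X4 = mat 2 2 (\<lambda>(i,j). adj $$ (i+m,j+m))"
  have "X = four_block_mat (1\<^sub>m m) (mat m 2 (\<lambda>(i,j). adj $$ (i,j+m))) (0\<^sub>m 2 m) X4"
    by (rule eq_matI) (auto simp: X_def X4_def four_block_mat_def n_def)
  then have dX: "det X = det X4"
    by (simp add: det_four_block_mat_lower_left_zero[of _ m _ 2] X4_def)
  define Y1 where "Y1 = mat m m (\<lambda>(i,j). A $$ (i,j))"
  have "Y = four_block_mat Y1 (0\<^sub>m m 2) (mat 2 m (\<lambda>(i,j). A $$ (i+m,j))) (det A \<cdot>\<^sub>m 1\<^sub>m 2)"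
    by (rule eq_matI) (auto simp: Y_def Y1_def four_block_mat_def n_def)
  then have dY: "det Y = det Y1 * (det A * det A)"
    by (simp add: det_four_block_mat_upper_right_zero[of _ m _ 2] Y1_def power2_eq_square)
  have "det A * det X = det Y"
    using det_mult[of A n X] A Xc AX n_def by simp
  then have "det A * det X4 = det A * (det A * det Y1)" using dX dY by (simp add: algebra_simps)
  then show ?thesis using d by (simp add: X4_def adj_def Y1_def)
qed

lemma desnanot_jacobi:
  fixes A :: "'a :: idom mat"
  assumes A: "A \<in> carrier_mat (m+2) (m+2)" and d: "det A \<noteq> 0"
  shows "cofactor A m m * cofactor A (Suc m) (Suc m) - cofactor A m (Suc m) * cofactor A (Suc m) m
       = det A * det (mat m m (\<lambda>(i,j). A $$ (i,j)))"
proof -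
  have "adj_mat A $$ (i,j) = cofactor A j i" if "i < m+2" "j < m+2" for i j
    using that A by (simp add: adj_mat_def)
  then have "det (mat 2 2 (\<lambda>(i,j). adj_mat A $$ (i+m, j+m)))
      = cofactor A m m * cofactor A (Suc m) (Suc m) - cofactor A m (Suc m) * cofactor A (Suc m) m"
    by (subst det_2x2) (auto simp: mult.commute)
  then show ?thesis using det_adj_trailing_block[OF A d] by simp
qed

lemma wronskian_jacobi:
  assumes nz: "wronskian (fs @ [g,h]) \<noteq> 0"
  shows "wronskian fs * wronskian (fs @ [g,h]) =
     wronskian (fs @ [g]) * pderiv (wronskian (fs @ [h]))
     - pderiv (wronskian (fs @ [g])) * wronskian (fs @ [h])"
proof -
  define m where "m = length fs"
  define M where "M = wronskian_mat (fs @ [g,h])"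
  have Mc: "M \<in> carrier_mat (m+2) (m+2)"
    unfolding M_def m_def using wronskian_mat_carrier[of "fs @ [g,h]"] by simp
  have dM: "det M \<noteq> 0" using nz unfolding M_def wronskian_eq_det .
  have "mat_delete M m m = wronskian_deriv_mat (fs @ [h])"
    by (rule eq_matI) (auto simp: mat_delete_def M_def wronskian_mat_def wronskian_deriv_mat_def m_def nth_append)
  then have c1: "cofactor M m m = pderiv (wronskian (fs @ [h]))"
    unfolding cofactor_def by (simp add: pderiv_wronskian)
  have "mat_delete M (Suc m) (Suc m) = wronskian_mat (fs @ [g])"
    by (rule eq_matI) (auto simp: mat_delete_def M_def wronskian_mat_def m_def nth_append)
  then have c2: "cofactor M (Suc m) (Suc m) = wronskian (fs @ [g])"
    unfolding cofactor_def wronskian_eq_det by simp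
  have "mat_delete M m (Suc m) = wronskian_deriv_mat (fs @ [g])"
    by (rule eq_matI) (auto simp: mat_delete_def M_def wronskian_mat_def wronskian_deriv_mat_def m_def nth_append)
  then have c3: "cofactor M m (Suc m) = - pderiv (wronskian (fs @ [g]))"
    unfolding cofactor_def by (simp add: pderiv_wronskian)
  have "mat_delete M (Suc m) m = wronskian_mat (fs @ [h])"
    by (rule eq_matI) (auto simp: mat_delete_def M_def wronskian_mat_def m_def nth_append)
  then have c4: "cofactor M (Suc m) m = - wronskian (fs @ [h])"
    unfolding cofactor_def wronskian_eq_det by simp
  have "mat m m (\<lambda>(i,j). M $$ (i,j)) = wronskian_mat fs"
    by (rule eq_matI) (auto simp: M_def wronskian_mat_def m_def nth_append)
  then show ?thesis
    using desnanot_jacobi[OF Mc dM] unfolding c1 c2 c3 c4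
    by (simp add: M_def wronskian_eq_det algebra_simps)
qed

section \<open>Order of vanishing of Wronskians at zero\<close>

definition falling :: "nat \<Rightarrow> nat \<Rightarrow> rat" where
  "falling t i = (\<Prod>k<i. of_nat t - of_nat k)"

definition falling_poly :: "nat \<Rightarrow> rat poly" where
  "falling_poly i = (\<Prod>k<i. [:- of_nat k, 1:])"

lemma poly_falling_poly: "poly (falling_poly i) (of_nat t) = falling t i"
  unfolding falling_poly_def falling_def poly_prod by simp

lemma falling_eq_0: "t < i \<Longrightarrow> falling t i = 0"
  unfolding falling_def by (rule prod_zero) auto

lemma degree_falling_poly: "degree (falling_poly i) = i"
  and lead_coeff_falling_poly: "lead_coeff (falling_poly i) = 1"
proof -
  have "lead_coeff (falling_poly i) = 1"
    unfolding falling_poly_def lead_coeff_prod by simp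
  moreover have "degree (falling_poly i) = i"
    unfolding falling_poly_def by (subst degree_prod_eq_sum_degree) auto
  ultimately show "degree (falling_poly i) = i" "lead_coeff (falling_poly i) = 1" by simp_all
qed

text \<open>The falling factorial polynomials of degree \<open>< r\<close> span all polynomials of degree \<open>< r\<close>.\<close>
lemma sum_poly_eq_0_if_falling:
  assumes h: "\<forall>i<r. (\<Sum>j<r. falling (t j) i * v j) = 0" and "degree q < r"
  shows "(\<Sum>j<r. poly q (of_nat (t j)) * v j) = 0"
  using \<open>degree q < r\<close>
proof (induction "degree q" arbitrary: q rule: less_induct)
  case less
  define d where "d = degree q"
  define q' where "q' = q - smult (lead_coeff q) (falling_poly d)"
  have "(\<Sum>j<r. poly q (of_nat (t j)) * v j) =
     lead_coeff q * (\<Sum>j<r. falling (t j) d * v j) + (\<Sum>j<r. poly q' (of_nat (t j)) * v j)"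
    unfolding q'_def
    by (simp add: poly_falling_poly sum_distrib_left sum.distrib[symmetric] algebra_simps)
  also have "(\<Sum>j<r. falling (t j) d * v j) = 0" using h less(2) d_def by auto
  also have "(\<Sum>j<r. poly q' (of_nat (t j)) * v j) = 0"
  proof (cases "d = 0")
    case True
    then have "q' = 0"
      unfolding q'_def d_def by (simp add: falling_poly_def degree_0_id[symmetric])
    then show ?thesis by simp
  next
    case False
    have "degree q' < degree q"
    proof (cases "q' = 0")
      case False
      show ?thesis
      proof (rule degree_less_if_less_eqI)
        show "coeff q' (degree q) = 0"
          using lead_coeff_falling_poly[of d] unfolding q'_def d_def degree_falling_poly by simp
        show "degree q' \<le> degree q"
          unfolding q'_def d_def by (simp add: degree_diff_le degree_falling_poly)
      qed (use False in simp)
    qed (use False d_def in simp)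
    then show ?thesis using less by simp
  qed
  finally show ?case by simp
qed

lemma det_falling_mat_nonzero:
  assumes inj: "inj_on t {..<r}"
  shows "det (mat r r (\<lambda>(i,j). falling (t j) i)) \<noteq> 0"
proof
  let ?F = "mat r r (\<lambda>(i,j). falling (t j) i)"
  assume "det ?F = 0"
  then obtain v where v: "v \<in> carrier_vec r" "v \<noteq> 0\<^sub>v r" "?F *\<^sub>v v = 0\<^sub>v r"
    using det_0_iff_vec_prod_zero_field[of ?F r] by auto
  have h: "\<forall>i<r. (\<Sum>j<r. falling (t j) i * v $ j) = 0"
  proof (intro allI impI)
    fix i assume i: "i < r"
    have "(?F *\<^sub>v v) $ i = 0" using v(3) i by simp
    then show "(\<Sum>j<r. falling (t j) i * v $ j) = 0"
      using i v(1) by (simp add: scalar_prod_def Matrix.row_def lessThan_atLeast0)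
  qed
  have "v $ j0 = 0" if j0: "j0 < r" for j0
  proof -
    define q where "q = (\<Prod>l\<in>{..<r} - {j0}. [:- of_nat (t l), 1:] :: rat poly)"
    have "degree q = card ({..<r} - {j0})" unfolding q_def
      by (subst degree_prod_eq_sum_degree) auto
    then have "degree q < r" using j0 by simp
    have q_vanishes: "poly q (of_nat (t j)) = 0" if "j \<in> {..<r} - {j0}" for j
      unfolding q_def poly_prod using that by (intro prod_zero) auto
    have "0 = (\<Sum>j<r. poly q (of_nat (t j)) * v $ j)"
      using sum_poly_eq_0_if_falling[OF h \<open>degree q < r\<close>] by simp
    also have "\<dots> = poly q (of_nat (t j0)) * v $ j0"
      using j0 q_vanishes by (subst sum.remove[of _ j0]) auto
    finally show ?thesis
      using inj j0 unfolding q_def poly_prod by (auto simp: inj_on_def)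
  qed
  then have "v = 0\<^sub>v r" using v(1) by (intro eq_vecI) auto
  with v(2) show False by simp
qed

lemma coeff_higher_pderiv_prod:
  "coeff ((pderiv ^^ i) p) s = (\<Prod>k<i. of_nat (s + i - k)) * coeff p (s + i)"
proof (induction i arbitrary: s)
  case (Suc i)
  have "coeff ((pderiv ^^ Suc i) p) s = of_nat (Suc s) * coeff ((pderiv ^^ i) p) (Suc s)"
    by (simp add: coeff_pderiv)
  also have "\<dots> = (\<Prod>k<Suc i. of_nat (s + Suc i - k)) * coeff p (s + Suc i)"
    using Suc by (simp add: prod.lessThan_Suc mult_ac)
  finally show ?case .
qed simp

lemma higher_pderiv_monom_factor:
  fixes g :: "rat poly" and t i :: nat
  assumes "\<forall>s<t. coeff g s = 0" and "coeff g t = 1"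
  defines "Q \<equiv> (pderiv ^^ i) g div monom 1 (t - i)"
  shows "(pderiv ^^ i) g = monom 1 (t - i) * Q"
    and "i \<le> t \<Longrightarrow> poly Q 0 = falling t i"
proof -
  have "monom 1 (t - i) dvd (pderiv ^^ i) g"
    unfolding monom_1_dvd_iff' coeff_higher_pderiv_prod using assms(1) by auto
  then show eq: "(pderiv ^^ i) g = monom 1 (t - i) * Q"
    unfolding Q_def by simp
  assume "i \<le> t"
  have "poly Q 0 = coeff (monom 1 (t - i) * Q) (t - i)"
    by (simp add: poly_0_coeff_0 coeff_monom_mult)
  also have "\<dots> = (\<Prod>k<i. of_nat (t - k))"
    unfolding eq[symmetric] coeff_higher_pderiv_prod using \<open>i \<le> t\<close> assms(2) by simp
  also have "\<dots> = falling t i" unfolding falling_def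
    by (rule prod.cong) (use \<open>i \<le> t\<close> in \<open>auto simp: of_nat_diff\<close>)
  finally show "poly Q 0 = falling t i" .
qed

lemma sum_lessThan_card_le_sum:
  "finite (S :: nat set) \<Longrightarrow> (\<Sum>i<card S. i) \<le> \<Sum>S"
proof (induction "card S" arbitrary: S)
  case (Suc n)
  define m where "m = Max S"
  have mS: "m \<in> S" using Suc m_def by (metis Max_in card_0_eq nat.distinct(1))
  have "S \<subseteq> {..m}" using Suc m_def by auto
  then have "card S \<le> card {..m}" by (intro card_mono) auto
  then have "n \<le> m" using Suc by simp
  moreover have "card (S - {m}) = n" using Suc mS by simp
  then have "(\<Sum>i<n. i) \<le> \<Sum>(S - {m})" using Suc.hyps(1)[of "S - {m}"] Suc.prems by simp
  moreover have "\<Sum>S = m + \<Sum>(S - {m})" using Suc mS by (simp add: sum.remove)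
  ultimately show ?case using Suc.hyps(2)[symmetric] by simp
qed simp

lemma prod_monom_1:
  "finite A \<Longrightarrow> (\<Prod>i\<in>A. monom (1::'a::comm_semiring_1) (d i)) = monom 1 (\<Sum>i\<in>A. d i)"
  by (induction A rule: finite_induct) (auto simp: mult_monom)

lemma sum_permutes_truncated_diff:
  fixes t :: "nat \<Rightarrow> nat"
  assumes "p permutes {0..<r}"
  shows "(\<Sum>i\<in>{0..<r}. t (p i) - i) + (\<Sum>i<r. i) = (\<Sum>j<r. t j) + (\<Sum>i\<in>{0..<r}. i - t (p i))"
proof -
  have "(\<Sum>i\<in>{0..<r}. t (p i)) = (\<Sum>j\<in>{0..<r}. t j)"
    using permutes_imp_bij[OF assms] by (rule sum.reindex_bij_betw)
  moreover have "(\<Sum>i\<in>{0..<r}. t (p i) - i) + (\<Sum>i\<in>{0..<r}. i)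
      = (\<Sum>i\<in>{0..<r}. t (p i)) + (\<Sum>i\<in>{0..<r}. i - t (p i))"
    unfolding sum.distrib[symmetric] by (rule sum.cong) (simp, arith)
  ultimately show ?thesis by (simp add: atLeast0LessThan)
qed

lemma poly_permutation_term_0:
  fixes t :: "nat \<Rightarrow> nat" and Q :: "nat \<Rightarrow> nat \<Rightarrow> rat poly"
  assumes p: "p permutes {0..<r}"
    and Q0: "\<And>i j. j < r \<Longrightarrow> i \<le> t j \<Longrightarrow> poly (Q i j) 0 = falling (t j) i"
  shows "poly (monom 1 (\<Sum>i\<in>{0..<r}. i - t (p i))) 0 * (\<Prod>i\<in>{0..<r}. poly (Q i (p i)) 0)
       = (\<Prod>i\<in>{0..<r}. falling (t (p i)) i)"
proof (cases "(\<Sum>i\<in>{0..<r}. i - t (p i)) = 0")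
  case True
  then have "\<forall>i<r. i \<le> t (p i)" by simp
  moreover have "p i < r" if "i < r" for i using p that by (simp add: permutes_in_image)
  ultimately have "(\<Prod>i\<in>{0..<r}. poly (Q i (p i)) 0) = (\<Prod>i\<in>{0..<r}. falling (t (p i)) i)"
    using Q0 by (intro prod.cong) auto
  then show ?thesis using True by (simp add: poly_monom)
next
  case False
  then obtain i0 where "i0 < r" "t (p i0) < i0" by auto
  then have "(\<Prod>i\<in>{0..<r}. falling (t (p i)) i) = 0"
    by (intro prod_zero) (use falling_eq_0 in force)+
  moreover obtain n where "(\<Sum>i\<in>{0..<r}. i - t (p i)) = Suc n"
    using False not0_implies_Suc by blast
  ultimately show ?thesis by (simp add: poly_monom)
qed

text \<open>In the permutation expansion the term of \<open>p\<close> is divisible by \<open>x\<close> to the power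
  \<open>\<Sum> (t (p i) - i)\<close>; this exceeds the minimum exactly when some \<open>t (p i) < i\<close>, and then the
  corresponding product of falling factorials vanishes as well.\<close>
lemma wronskian_lowest_term:
  assumes len: "length gs = r" and inj: "inj_on t {..<r}"
    and low: "\<forall>j<r. \<forall>s<t j. coeff (gs!j) s = 0" and lead: "\<forall>j<r. coeff (gs!j) (t j) = 1"
  obtains Q where "wronskian gs = monom 1 ((\<Sum>j<r. t j) - (\<Sum>i<r. i)) * Q"
    and "poly Q 0 = det (mat r r (\<lambda>(i,j). falling (t j) i))"
proof -
  define K where "K = (\<Sum>j<r. t j) - (\<Sum>i<r. i)"
  define P where "P = {p. p permutes {0..<r}}"
  define excess where "excess p = (\<Sum>i\<in>{0..<r}. i - t (p i))" for p
  define Qf where "Qf i j = (pderiv ^^ i) (gs!j) div monom 1 (t j - i)" for i j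
  have Qf: "(pderiv ^^ i) (gs!j) = monom 1 (t j - i) * Qf i j" if "j < r" for i j
    unfolding Qf_def using higher_pderiv_monom_factor(1) low lead that by blast
  have Qf0: "poly (Qf i j) 0 = falling (t j) i" if "j < r" "i \<le> t j" for i j
    unfolding Qf_def using higher_pderiv_monom_factor(2) low lead that by blast
  have "(\<Sum>i<r. i) \<le> \<Sum>(t ` {..<r})"
    using sum_lessThan_card_le_sum[of "t ` {..<r}"] inj by (simp add: card_image)
  also have "\<dots> = (\<Sum>j<r. t j)" using inj by (simp add: sum.reindex)
  finally have D: "(\<Sum>i\<in>{0..<r}. t (p i) - i) = K + excess p" if "p \<in> P" for p
    using sum_permutes_truncated_diff[of p r t] that unfolding P_def K_def excess_def by simp
  have pr: "p i < r" if "p \<in> P" "i < r" for p i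
    using that unfolding P_def by (simp add: permutes_in_image)
  define Q where "Q = (\<Sum>p\<in>P. signof p * (monom 1 (excess p) * (\<Prod>i\<in>{0..<r}. Qf i (p i))))"
  have "wronskian gs = (\<Sum>p\<in>P. signof p * (\<Prod>i\<in>{0..<r}. (pderiv ^^ i) (gs ! p i)))"
    unfolding wronskian_eq_det P_def using wronskian_mat_carrier[of gs] len
    by (subst det_def'[of _ r])
      (auto simp: wronskian_mat_def intro!: sum.cong prod.cong dest: permutes_in_image)
  also have "\<dots> = monom 1 K * Q"
    unfolding Q_def sum_distrib_left
  proof (rule sum.cong)
    fix p assume p: "p \<in> P"
    have "(\<Prod>i\<in>{0..<r}. (pderiv ^^ i) (gs ! p i))
        = monom 1 (\<Sum>i\<in>{0..<r}. t (p i) - i) * (\<Prod>i\<in>{0..<r}. Qf i (p i))"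
      using Qf pr[OF p] by (simp add: prod.distrib prod_monom_1)
    moreover have "monom 1 (K + excess p) = monom 1 K * monom (1::rat) (excess p)"
      by (simp add: mult_monom)
    ultimately show "signof p * (\<Prod>i\<in>{0..<r}. (pderiv ^^ i) (gs ! p i))
        = monom 1 K * (signof p * (monom 1 (excess p) * (\<Prod>i\<in>{0..<r}. Qf i (p i))))"
      by (simp add: D[OF p] mult_ac)
  qed simp
  finally have W: "wronskian gs = monom 1 K * Q" .
  have "poly Q 0 = (\<Sum>p\<in>P. signof p * (\<Prod>i\<in>{0..<r}. falling (t (p i)) i))"
    unfolding Q_def poly_sum excess_def P_def
    using poly_permutation_term_0[where Q = Qf, OF _ Qf0]
    by (intro sum.cong) (simp_all add: poly_prod flip: mult.assoc)
  also have "\<dots> = det (mat r r (\<lambda>(i,j). falling (t j) i))"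
    unfolding P_def
    by (subst det_def'[of _ r]) (auto intro!: sum.cong prod.cong dest: permutes_in_image)
  finally show ?thesis using W that K_def by blast
qed

lemma sum_lessThan_nth_distinct:
  "distinct xs \<Longrightarrow> (\<Sum>k<length xs. f (xs ! k)) = (\<Sum>x\<in>set xs. f x)"
  by (simp add: sum.distinct_set_conv_list sum_list_sum_nth atLeast0LessThan)

lemma mult_mat_vec_solvable:
  fixes A :: "'a::field mat"
  assumes A: "A \<in> carrier_mat n n" and "det A \<noteq> 0" and b: "b \<in> carrier_vec n"
  obtains x where "x \<in> carrier_vec n" and "A *\<^sub>v x = b"
proof
  define G where "G = (1 / det A) \<cdot>\<^sub>m adj_mat A"
  have G: "G \<in> carrier_mat n n" unfolding G_def using adj_mat(1)[OF A] by simp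
  have "A * G = (1 / det A) \<cdot>\<^sub>m (A * adj_mat A)"
    unfolding G_def using A adj_mat(1)[OF A] by (simp add: mult_smult_distrib)
  also have "\<dots> = 1\<^sub>m n"
    using adj_mat(2)[OF A] \<open>det A \<noteq> 0\<close> by (simp, intro eq_matI) auto
  finally have "A * G = 1\<^sub>m n" .
  then show "A *\<^sub>v (G *\<^sub>v b) = b"
    using A G b by (simp flip: assoc_mult_mat_vec)
  show "G *\<^sub>v b \<in> carrier_vec n" using G b by simp
qed

lemma coeff_herm_combination_parity:
  assumes "\<forall>n\<in>set ns. n mod 2 = q" and "s mod 2 \<noteq> q"
  shows "coeff (\<Sum>k<length ns. smult (c k) (herm (ns ! k))) s = 0"
proof -
  have "odd (ns ! k + s)" if "k < length ns" for k
    using assms that nth_mem[OF that] by (auto simp: mod2_eq_if split: if_splits)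
  then show ?thesis by (simp add: coeff_sum coeff_herm_eq_0_if_odd)
qed

lemma coeff_herm_combination_eq_mult_mat_vec:
  assumes "v \<in> carrier_vec (length ns)" and "i < length ns"
  shows "coeff (\<Sum>k<length ns. smult (v $ k) (herm (ns ! k))) (2 * i + q)
       = (mat (length ns) (length ns) (\<lambda>(i,k). coeff (herm (ns ! k)) (2 * i + q)) *\<^sub>v v) $ i"
  using assms by (simp add: coeff_sum scalar_prod_def Matrix.row_def lessThan_atLeast0 mult.commute)

lemma det_herm_coeff_mat_nonzero:
  assumes dist: "distinct ns" and par: "\<forall>n\<in>set ns. n mod 2 = q"
  shows "det (mat (length ns) (length ns) (\<lambda>(i,k). coeff (herm (ns ! k)) (2 * i + q))) \<noteq> 0"
proof
  let ?m = "length ns"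
  let ?A = "mat ?m ?m (\<lambda>(i,k). coeff (herm (ns ! k)) (2 * i + q))"
  assume "det ?A = 0"
  then obtain v where v: "v \<in> carrier_vec ?m" "v \<noteq> 0\<^sub>v ?m" "?A *\<^sub>v v = 0\<^sub>v ?m"
    using det_0_iff_vec_prod_zero_field[of ?A ?m] by auto
  have "monom 1 (2 * ?m + q) dvd (\<Sum>k<?m. smult (v $ k) (herm (ns ! k)))"
    unfolding monom_1_dvd_iff'
  proof (intro allI impI)
    fix s assume s: "s < 2 * ?m + q"
    show "coeff (\<Sum>k<?m. smult (v $ k) (herm (ns ! k))) s = 0"
    proof (cases "s mod 2 = q")
      case True
      then obtain i where i: "s = 2 * i + q" by (metis mult_div_mod_eq)
      then have "i < ?m" using s by simp
      moreover from this have "(?A *\<^sub>v v) $ i = 0" using v(3) by simp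
      ultimately show ?thesis
        unfolding i by (simp only: coeff_herm_combination_eq_mult_mat_vec[OF v(1)])
    qed (use coeff_herm_combination_parity[OF par] in simp)
  qed
  then have "\<forall>k<?m. v $ k = 0"
    using herm_combination_coeffs_eq_0[OF dist par] by blast
  then have "v = 0\<^sub>v ?m" using v(1) by (intro eq_vecI) auto
  with v(2) show False by simp
qed

text \<open>Within one parity class the lowest coefficients form an invertible matrix, so suitable
  combinations have any prescribed lowest term \<open>x\<^bsup>2i+q\<^esup>\<close>.\<close>
lemma herm_class_lowest_term:
  assumes dist: "distinct ns" and par: "\<forall>n\<in>set ns. n mod 2 = q" and i: "i < length ns"
  obtains c where "\<forall>s<2 * i + q. coeff (\<Sum>k<length ns. smult (c k) (herm (ns ! k))) s = 0"
    and "coeff (\<Sum>k<length ns. smult (c k) (herm (ns ! k))) (2 * i + q) = 1"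
proof -
  let ?m = "length ns"
  let ?A = "mat ?m ?m (\<lambda>(i,k). coeff (herm (ns ! k)) (2 * i + q))"
  obtain x where x: "x \<in> carrier_vec ?m" "?A *\<^sub>v x = unit_vec ?m i"
    using mult_mat_vec_solvable[of ?A ?m "unit_vec ?m i"] det_herm_coeff_mat_nonzero[OF dist par]
    by auto
  have low: "coeff (\<Sum>k<?m. smult (x $ k) (herm (ns ! k))) s = 0" if s: "s < 2 * i + q" for s
  proof (cases "s mod 2 = q")
    case True
    then obtain i' where i': "s = 2 * i' + q" by (metis mult_div_mod_eq)
    then have "i' < i" using s by simp
    then have "(?A *\<^sub>v x) $ i' = 0" using x(2) i by simp
    with \<open>i' < i\<close> i show ?thesis
      unfolding i' by (simp only: coeff_herm_combination_eq_mult_mat_vec[OF x(1)])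
  qed (use coeff_herm_combination_parity[OF par] in simp)
  have "(?A *\<^sub>v x) $ i = 1" using x(2) i by simp
  then have "coeff (\<Sum>k<?m. smult (x $ k) (herm (ns ! k))) (2 * i + q) = 1"
    by (simp only: coeff_herm_combination_eq_mult_mat_vec[OF x(1) i])
  with low show ?thesis using that by blast
qed

definition parity_count :: "nat \<Rightarrow> nat set \<Rightarrow> nat" where
  "parity_count q N = card {n\<in>N. n mod 2 = q}"

lemma parity_count_add:
  assumes "finite N"
  shows "parity_count 0 N + parity_count 1 N = card N"
proof -
  have "N = {n\<in>N. n mod 2 = 0} \<union> {n\<in>N. n mod 2 = 1}" by auto
  with assms show ?thesis
    unfolding parity_count_def by (subst (3) \<open>N = _\<close>, subst card_Un_disjoint) auto
qed

lemma herm_lowest_term_in_span: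
  assumes dist: "distinct ns" and i: "i < parity_count q (set ns)"
  obtains C where "\<forall>s<2 * i + q. coeff (\<Sum>k<length ns. smult (C k) (herm (ns ! k))) s = 0"
    and "coeff (\<Sum>k<length ns. smult (C k) (herm (ns ! k))) (2 * i + q) = 1"
proof -
  define cl where "cl = filter (\<lambda>n. n mod 2 = q) ns"
  have cl: "distinct cl" "set cl = {n\<in>set ns. n mod 2 = q}"
    unfolding cl_def using dist by auto
  then have "i < length cl"
    using i distinct_card[OF cl(1)] unfolding parity_count_def by simp
  then obtain c where c:
      "\<forall>s<2 * i + q. coeff (\<Sum>k<length cl. smult (c k) (herm (cl ! k))) s = 0"
      "coeff (\<Sum>k<length cl. smult (c k) (herm (cl ! k))) (2 * i + q) = 1"
    using herm_class_lowest_term[OF cl(1)] cl(2) by blast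
  define d where "d n = c (THE k. k < length cl \<and> cl ! k = n)" for n
  have d: "d (cl ! k) = c k" if "k < length cl" for k
    unfolding d_def using that cl(1) by (subst the_equality) (auto simp: nth_eq_iff_index_eq)
  define C where "C k = (if ns ! k mod 2 = q then d (ns ! k) else 0)" for k
  have "(\<Sum>k<length ns. smult (C k) (herm (ns ! k)))
      = (\<Sum>n\<in>set ns. smult (if n mod 2 = q then d n else 0) (herm n))"
    unfolding C_def by (rule sum_lessThan_nth_distinct[OF dist])
  also have "\<dots> = (\<Sum>n\<in>set cl. smult (d n) (herm n))"
    unfolding cl(2) by (rule sum.mono_neutral_cong_right) auto
  also have "\<dots> = (\<Sum>k<length cl. smult (c k) (herm (cl ! k)))"
    unfolding sum_lessThan_nth_distinct[OF cl(1), symmetric] by (rule sum.cong) (simp_all add: d)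
  finally have "(\<Sum>k<length ns. smult (C k) (herm (ns ! k)))
      = (\<Sum>k<length cl. smult (c k) (herm (cl ! k)))" .
  with c show ?thesis by (intro that[of C]) simp_all
qed

lemma sum_lessThan_evens: "(\<Sum>i<a. 2 * i) = a * (a - 1::nat)"
  by (induction a) (auto simp: algebra_simps)

lemma sum_lessThan_odds: "(\<Sum>i<b. 2 * i + 1) = b * (b::nat)"
  by (induction b) (auto simp: algebra_simps)

lemma sum_two_arithmetic_progressions:
  "(\<Sum>j<a + b. if j < a then 2 * j else 2 * (j - a) + 1) = a * (a - 1) + b * (b::nat)"
proof -
  have "(\<Sum>j<a + b. if j < a then 2 * j else 2 * (j - a) + 1)
      = (\<Sum>j<a. 2 * j) + (\<Sum>j<b. 2 * j + 1)"
    by (induction b) auto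
  then show ?thesis by (simp only: sum_lessThan_evens sum_lessThan_odds)
qed

text \<open>Replace the \<open>He\<^sub>n\<close> by combinations \<open>g\<^sub>j\<close> with lowest terms \<open>1, x\<^sup>2, x\<^sup>4, \<dots>\<close> (one for
  each even \<open>n\<close>) and \<open>x, x\<^sup>3, \<dots>\<close> (one for each odd \<open>n\<close>); these exponents are distinct.\<close>
theorem wronskian_herm_order:
  assumes dist: "distinct ns"
  defines "m0 \<equiv> parity_count 0 (set ns)" and "m1 \<equiv> parity_count 1 (set ns)"
  obtains Q where "wronskian (map herm ns)
      = monom 1 (m0 * (m0 - 1) + m1 * m1 - (\<Sum>i<length ns. i)) * Q"
    and "poly Q 0 \<noteq> 0"
proof -
  define r where "r = length ns"
  have r: "r = m0 + m1"
    unfolding r_def m0_def m1_def using parity_count_add[of "set ns"] dist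
    by (simp add: distinct_card)
  define pq where "pq j = (if j < m0 then 0 else 1::nat)" for j
  define ix where "ix j = (if j < m0 then j else j - m0)" for j
  define t where "t j = 2 * ix j + pq j" for j
  have "ix j < parity_count (pq j) (set ns)" if "j < r" for j
    using that r unfolding ix_def pq_def m0_def m1_def by auto
  then have "\<exists>C. (\<forall>s<t j. coeff (\<Sum>k<r. smult (C k) (herm (ns ! k))) s = 0)
      \<and> coeff (\<Sum>k<r. smult (C k) (herm (ns ! k))) (t j) = 1" if "j < r" for j
    using herm_lowest_term_in_span[OF dist] that unfolding t_def r_def by metis
  then obtain CC where CC: "\<And>j. j < r \<Longrightarrow> \<forall>s<t j. coeff (\<Sum>k<r. smult (CC j k) (herm (ns ! k))) s = 0"
      "\<And>j. j < r \<Longrightarrow> coeff (\<Sum>k<r. smult (CC j k) (herm (ns ! k))) (t j) = 1"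
    by metis
  define gs where "gs = map (\<lambda>j. \<Sum>k<r. smult (CC j k) (map herm ns ! k)) [0..<r]"
  have gs: "gs ! j = (\<Sum>k<r. smult (CC j k) (herm (ns ! k)))" if "j < r" for j
    unfolding gs_def using that r_def by simp
  have inj: "inj_on t {..<r}"
    by (rule inj_onI) (auto simp: t_def ix_def pq_def split: if_splits; presburger)
  have len: "length gs = r" unfolding gs_def by simp
  have "\<forall>j<r. \<forall>s<t j. coeff (gs ! j) s = 0" and "\<forall>j<r. coeff (gs ! j) (t j) = 1"
    using CC gs by simp_all
  then obtain Q where Q: "wronskian gs = monom 1 ((\<Sum>j<r. t j) - (\<Sum>i<r. i)) * Q"
      "poly Q 0 = det (mat r r (\<lambda>(i,j). falling (t j) i))"
    using wronskian_lowest_term[OF len inj] by blast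
  have Q0: "poly Q 0 \<noteq> 0" using Q(2) det_falling_mat_nonzero[OF inj] by simp
  have "(\<Sum>j<r. t j) = (\<Sum>j<m0 + m1. if j < m0 then 2 * j else 2 * (j - m0) + 1)"
    unfolding r t_def ix_def pq_def by (rule sum.cong) auto
  then have sum_t: "(\<Sum>j<r. t j) = m0 * (m0 - 1) + m1 * m1"
    by (simp add: sum_two_arithmetic_progressions)
  define dC where "dC = det (mat r r (\<lambda>(k,j). CC j k))"
  have W: "wronskian gs = smult dC (wronskian (map herm ns))"
    unfolding gs_def dC_def by (rule wronskian_lincomb) (simp add: r_def)
  have "wronskian gs \<noteq> 0" using Q(1) Q0 by (auto simp: monom_eq_0_iff)
  then have "dC \<noteq> 0" using W by auto
  then have "wronskian (map herm ns) = monom 1 (m0 * (m0 - 1) + m1 * m1 - (\<Sum>i<r. i)) * smult (1 / dC) Q"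
    using W Q(1) sum_t by (simp add: mult_smult_right)
  moreover have "poly (smult (1 / dC) Q) 0 \<noteq> 0" using Q0 \<open>dC \<noteq> 0\<close> by simp
  ultimately show ?thesis using that r_def by blast
qed

section \<open>The 2-core\<close>

lemma remove_2hook_invariants:
  assumes "remove_2hook N M" "finite N"
  shows "finite M" "card M = card N" "parity_count q M = parity_count q N" "\<Sum>M + 2 = \<Sum>N"
proof -
  obtain a where a: "a \<in> N" "2 \<le> a" "a - 2 \<notin> N" "M = insert (a - 2) (N - {a})"
    using assms(1) unfolding remove_2hook_def by blast
  have par: "(a - 2) mod 2 = a mod 2" using a(2) by (metis le_add_diff_inverse2 mod_add_self2)
  show "finite M" using a assms(2) by simp
  show "card M = card N"
    using a assms(2) card_Suc_Diff1[OF assms(2) a(1)] by simp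
  show "parity_count q M = parity_count q N"
  proof (cases "a mod 2 = q")
    case True
    define S where "S = {n\<in>N. n mod 2 = q}"
    have fin: "finite S" and mem: "a \<in> S" using assms(2) a True unfolding S_def by auto
    have "{n\<in>M. n mod 2 = q} = insert (a - 2) (S - {a})"
      using a par True unfolding S_def by auto
    then have "card {n\<in>M. n mod 2 = q} = Suc (card (S - {a}))"
      using fin a unfolding S_def by (simp add: card_insert_disjoint)
    also have "\<dots> = card S" using card_Suc_Diff1[OF fin mem] .
    finally show ?thesis unfolding parity_count_def S_def .
  next
    case False
    then have "{n\<in>M. n mod 2 = q} = {n\<in>N. n mod 2 = q}" using a par by auto
    then show ?thesis unfolding parity_count_def by simp
  qed
  have "\<Sum>M = (a - 2) + \<Sum>(N - {a})" using a assms(2) by simp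
  moreover have "\<Sum>N = a + \<Sum>(N - {a})" using a assms(2) by (simp add: sum.remove)
  ultimately show "\<Sum>M + 2 = \<Sum>N" using a(2) by simp
qed

lemma remove_2hook_rtranclp_invariants:
  assumes "remove_2hook\<^sup>*\<^sup>* N M" "finite N"
  shows "finite M \<and> card M = card N \<and> (\<forall>q. parity_count q M = parity_count q N)"
  using assms by (induction rule: rtranclp_induct) (auto dest: remove_2hook_invariants)

lemma remove_2hook_terminates:
  "finite N \<Longrightarrow> \<exists>M. remove_2hook\<^sup>*\<^sup>* N M \<and> (\<nexists>M'. remove_2hook M M')"
proof (induction "\<Sum>N" arbitrary: N rule: less_induct)
  case less
  show ?case
  proof (cases "\<exists>M'. remove_2hook N M'")
    case True
    then obtain M' where M': "remove_2hook N M'" by blast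
    then have "finite M'" "\<Sum>M' < \<Sum>N" using remove_2hook_invariants[OF M' less(2)] by auto
    then obtain M where "remove_2hook\<^sup>*\<^sup>* M' M" "\<nexists>M''. remove_2hook M M''"
      using less(1) by blast
    then show ?thesis using M' by (meson converse_rtranclp_into_rtranclp)
  qed blast
qed

lemma two_core_terminal:
  assumes "finite N"
  shows "remove_2hook\<^sup>*\<^sup>* N (two_core N)" and "\<nexists>M'. remove_2hook (two_core N) M'"
proof -
  have "remove_2hook\<^sup>*\<^sup>* N (two_core N) \<and> (\<nexists>M'. remove_2hook (two_core N) M')"
    unfolding two_core_def by (rule someI_ex[OF remove_2hook_terminates[OF assms]])
  then show "remove_2hook\<^sup>*\<^sup>* N (two_core N)" "\<nexists>M'. remove_2hook (two_core N) M'" by auto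
qed

lemma downward_closed_eq_lessThan:
  assumes "finite (E :: nat set)" "\<forall>i. Suc i \<in> E \<longrightarrow> i \<in> E"
  shows "E = {..<card E}"
proof (cases "E = {}")
  case False
  define M where "M = Max E"
  have "M - k \<in> E" for k
  proof (induction k)
    case 0
    then show ?case using False assms(1) M_def by simp
  next
    case (Suc k)
    then show ?case using assms(2) by (cases "M - k") (auto simp: diff_Suc split: nat.splits)
  qed
  then have "{..M} \<subseteq> E" by (metis atMost_iff diff_diff_cancel subsetI)
  moreover have "E \<subseteq> {..M}" using assms M_def by auto
  ultimately have "E = {..M}" by blast
  then show ?thesis by (simp add: lessThan_Suc_atMost)
qed simp

lemma terminal_parity_class:
  assumes fin: "finite M" and terminal: "\<nexists>M'. remove_2hook M M'" and q: "q < 2"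
  shows "{n\<in>M. n mod 2 = q} = (\<lambda>i. 2 * i + q) ` {..<parity_count q M}"
proof -
  define E where "E = {i. 2 * i + q \<in> M}"
  have img: "{n\<in>M. n mod 2 = q} = (\<lambda>i. 2 * i + q) ` E"
  proof (intro equalityI subsetI)
    fix n assume "n \<in> {n\<in>M. n mod 2 = q}"
    then show "n \<in> (\<lambda>i. 2 * i + q) ` E"
      unfolding E_def by (intro image_eqI[of n _ "n div 2"]) auto
  qed (use q E_def in auto)
  have inj: "inj (\<lambda>i. 2 * i + q)" by (auto simp: inj_on_def)
  have "finite E"
    unfolding E_def using finite_vimageI[OF fin inj] by (simp add: vimage_def)
  moreover have "\<forall>a\<in>M. 2 \<le> a \<longrightarrow> a - 2 \<in> M"
    using terminal unfolding remove_2hook_def by blast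
  then have "\<forall>i. Suc i \<in> E \<longrightarrow> i \<in> E"
    unfolding E_def by (force simp: algebra_simps)
  ultimately have "E = {..<card E}" by (rule downward_closed_eq_lessThan)
  moreover have "card E = parity_count q M"
    unfolding parity_count_def img using inj by (simp add: card_image inj_on_def)
  ultimately show ?thesis using img by simp
qed

lemma sum_terminal:
  assumes "finite M" and "\<nexists>M'. remove_2hook M M'"
  shows "\<Sum>M = parity_count 0 M * (parity_count 0 M - 1) + parity_count 1 M * parity_count 1 M"
proof -
  have "M = {n\<in>M. n mod 2 = 0} \<union> {n\<in>M. n mod 2 = 1}" by auto
  then have "\<Sum>M = \<Sum>{n\<in>M. n mod 2 = 0} + \<Sum>{n\<in>M. n mod 2 = 1}"
    using assms(1) by (subst sum.union_disjoint[symmetric]) auto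
  also have "{n\<in>M. n mod 2 = 0} = (\<lambda>i. 2 * i) ` {..<parity_count 0 M}"
    using terminal_parity_class[OF assms, of 0] by simp
  also have "{n\<in>M. n mod 2 = 1} = (\<lambda>i. 2 * i + 1) ` {..<parity_count 1 M}"
    using terminal_parity_class[OF assms, of 1] by simp
  also have "\<Sum>((\<lambda>i. 2 * i) ` {..<parity_count 0 M}) + \<Sum>((\<lambda>i. 2 * i + 1) ` {..<parity_count 1 M})
      = (\<Sum>i<parity_count 0 M. 2 * i) + (\<Sum>i<parity_count 1 M. 2 * i + 1)"
    by (simp add: sum.reindex inj_on_def)
  finally show ?thesis by (simp only: sum_lessThan_evens sum_lessThan_odds)
qed

lemma part_size_two_core:
  assumes "finite N"
  shows "part_size (two_core N) = parity_count 0 N * (parity_count 0 N - 1)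
     + parity_count 1 N * parity_count 1 N - card N * (card N - 1) div 2"
proof -
  define M where "M = two_core N"
  have inv: "finite M" "card M = card N" "\<forall>q. parity_count q M = parity_count q N"
    using remove_2hook_rtranclp_invariants[OF two_core_terminal(1)[OF assms] assms]
    unfolding M_def by auto
  have "\<nexists>M'. remove_2hook M M'" using two_core_terminal(2)[OF assms] unfolding M_def .
  from sum_terminal[OF inv(1) this] inv(2,3) show ?thesis
    unfolding part_size_def M_def[symmetric] by presburger
qed

section \<open>Divisibility of the polynomials \<open>R\<^sub>\<lambda>\<close>\<close>

lemma hermP_eq_smult_wronskian:
  assumes "sorted_wrt (<) ns"
  obtains c where "c \<noteq> 0" and "hermP ns = smult c (wronskian (map herm ns))"
proof -
  let ?I = "{(i, j). i < j \<and> j < length ns}"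
  have "finite ?I"
    by (rule finite_subset[of _ "{..<length ns} \<times> {..<length ns}"]) auto
  moreover have "\<forall>(i, j) \<in> ?I. (of_nat (ns ! j - ns ! i) :: rat) \<noteq> 0"
    using sorted_wrt_nth_less[OF assms] by fastforce
  ultimately have "(\<Prod>(i, j) \<in> ?I. of_nat (ns ! j - ns ! i) :: rat) \<noteq> 0"
    by (simp add: case_prod_beta)
  then show ?thesis
    using that[of "inverse (\<Prod>(i, j) \<in> ?I. of_nat (ns ! j - ns ! i))"] by (simp add: hermP_def)
qed

lemma gauss_sum_lessThan: "(\<Sum>i<r. i) = r * (r - 1) div (2::nat)"
proof -
  have "2 * (\<Sum>i<r. i) = r * (r - 1)" by (induction r) (auto simp: algebra_simps)
  then show ?thesis by simp
qed

text \<open>The order of vanishing of \<open>He\<^sub>\<lambda>\<close> at \<open>0\<close> equals the size of the 2-core, so the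
  division defining \<open>hermR\<close> is exact.\<close>
theorem hermP_factorization:
  assumes "sorted_wrt (<) ns"
  shows "hermP ns = [:0,1:] ^ part_size (two_core (set ns)) * hermR ns"
    and "poly (hermR ns) 0 \<noteq> 0"
proof -
  have dist: "distinct ns" using assms by (simp add: strict_sorted_iff)
  define K where "K = part_size (two_core (set ns))"
  have "parity_count 0 (set ns) * (parity_count 0 (set ns) - 1)
      + parity_count 1 (set ns) * parity_count 1 (set ns) - (\<Sum>i<length ns. i) = K"
    unfolding K_def part_size_two_core[OF finite_set] gauss_sum_lessThan
    using dist by (simp add: distinct_card)
  then obtain Q where Q: "wronskian (map herm ns) = monom 1 K * Q" "poly Q 0 \<noteq> 0"
    using wronskian_herm_order[OF dist] by metis
  obtain c where c: "c \<noteq> 0" "hermP ns = smult c (wronskian (map herm ns))"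
    using hermP_eq_smult_wronskian[OF assms] .
  have hermP: "hermP ns = [:0,1:] ^ K * smult c Q"
    using c Q by (simp add: monom_altdef mult_smult_right)
  have "hermR ns = smult c Q" unfolding hermR_def K_def[symmetric] hermP
    by (rule nonzero_mult_div_cancel_left) simp
  with hermP c Q show "hermP ns = [:0,1:] ^ part_size (two_core (set ns)) * hermR ns"
    and "poly (hermR ns) 0 \<noteq> 0" by (simp_all add: K_def)
qed

lemma herm_wronskian_factorization:
  assumes "sorted_wrt (<) ns"
  obtains c k where "c \<noteq> 0" and "wronskian (map herm ns) = smult c ([:0,1:] ^ k * hermR ns)"
proof -
  obtain c where "c \<noteq> 0" "hermP ns = smult c (wronskian (map herm ns))"
    using hermP_eq_smult_wronskian[OF assms] .
  then have "wronskian (map herm ns)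
      = smult (inverse c) ([:0,1:] ^ part_size (two_core (set ns)) * hermR ns)"
    using hermP_factorization(1)[OF assms] by simp
  moreover have "inverse c \<noteq> 0" using \<open>c \<noteq> 0\<close> by simp
  ultimately show ?thesis using that by blast
qed

lemma irreducible_not_dvd_X_power:
  fixes p :: "'a::field_gcd poly"
  assumes irr: "irreducible p" and p0: "poly p 0 \<noteq> 0"
  shows "\<not> p dvd [:0,1:] ^ k"
proof
  assume "p dvd [:0,1:] ^ k"
  moreover have "prime_elem p" using irr by (simp add: prime_elem_iff_irreducible)
  ultimately have "p dvd [:0,1:]" by (rule prime_elem_dvd_power[rotated])
  then obtain q where q: "[:0,1:] = p * q" by (elim dvdE)
  have "poly p 0 * poly q 0 = 0" using arg_cong[OF q, of "\<lambda>f. poly f 0"] by simp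
  then have "[:0,1:] dvd q" using p0 by (simp add: poly_eq_0_iff_dvd[of q 0, simplified])
  then obtain s where "q = [:0,1:] * s" by (elim dvdE)
  with q have "[:0,1:] * (p * s) = [:0,1:] * 1" by (metis mult.left_commute mult.right_neutral)
  then have "p * s = 1" by (rule mult_left_cancel[THEN iffD1, rotated]) simp
  then have "is_unit p" by (metis dvd_triv_left)
  with irr show False by (simp add: irreducible_not_unit)
qed

lemma irreducible_not_dvd_pderiv_X_power_mult:
  fixes p :: "'a::{field_char_0, field_gcd} poly"
  assumes irr: "irreducible p" and p0: "poly p 0 \<noteq> 0"
  shows "\<not> p dvd pderiv ([:0,1:] ^ k * p)"
proof
  assume "p dvd pderiv ([:0,1:] ^ k * p)"
  then have "p dvd [:0,1:] ^ k * pderiv p"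
    by (simp add: pderiv_mult dvd_add_left_iff)
  then have "p dvd [:0,1:] ^ k \<or> p dvd pderiv p"
    using prime_elem_dvd_mult_iff prime_elem_iff_irreducible irr by blast
  moreover have "\<not> p dvd pderiv p"
  proof
    assume "p dvd pderiv p"
    have "degree p \<noteq> 0" using irr by (auto simp: is_unit_iff_degree irreducible_not_unit)
    then have "pderiv p \<noteq> 0" by (simp add: pderiv_eq_0_iff)
    with \<open>p dvd pderiv p\<close> have "degree p \<le> degree (pderiv p)" by (rule dvd_imp_degree_le)
    with \<open>degree p \<noteq> 0\<close> show False by (simp add: degree_pderiv)
  qed
  ultimately show False using irreducible_not_dvd_X_power[OF irr p0] by blast
qed

text \<open>If \<open>p\<close> divides \<open>D\<close> and \<open>B = c x\<^sup>k p\<close>, the identity gives \<open>p | B' C\<close>, and \<open>p \<nmid> B'\<close>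
  because \<open>p\<close> is squarefree and coprime to \<open>x\<close>.\<close>
lemma irreducible_dvd_of_jacobi_identity:
  fixes p :: "'a::{field_char_0, field_gcd} poly"
  assumes irr: "irreducible p" and p0: "poly p 0 \<noteq> 0"
    and jacobi: "A * D = B * pderiv C - pderiv B * C"
    and "p dvd D" and B: "B = smult c ([:0,1:] ^ k * p)" and "c \<noteq> 0"
  shows "p dvd C"
proof -
  have "p dvd B * pderiv C - A * D" using \<open>p dvd D\<close> B by (simp add: dvd_smult)
  also have "B * pderiv C - A * D = pderiv B * C" using jacobi by simp
  finally have "p dvd pderiv B * C" .
  moreover have "\<not> p dvd pderiv B"
    using irreducible_not_dvd_pderiv_X_power_mult[OF irr p0] B \<open>c \<noteq> 0\<close>
    by (simp add: pderiv_smult dvd_smult_iff)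
  ultimately show ?thesis
    using prime_elem_dvd_mult_iff prime_elem_iff_irreducible irr by blast
qed

lemma irreducible_hermR_dvd_swap_last:
  assumes "sorted_wrt (<) (F @ [a, b])"
    and "irreducible (hermR (F @ [a]))" and "hermR (F @ [a]) dvd hermR (F @ [a, b])"
  shows "hermR (F @ [a]) dvd hermR (F @ [b])"
proof -
  have sorted: "sorted_wrt (<) (F @ [a])" "sorted_wrt (<) (F @ [b])" "sorted_wrt (<) (F @ [a, b])"
    using assms(1) by (auto simp: sorted_wrt_append)
  define p where "p = hermR (F @ [a])"
  have irr: "irreducible p" and "p dvd hermR (F @ [a, b])"
    using assms(2,3) unfolding p_def by simp_all
  have p0: "poly p 0 \<noteq> 0" unfolding p_def by (rule hermP_factorization(2)[OF sorted(1)])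
  obtain cB kB where B: "cB \<noteq> 0" "wronskian (map herm (F @ [a])) = smult cB ([:0,1:] ^ kB * p)"
    using herm_wronskian_factorization[OF sorted(1)] unfolding p_def by blast
  obtain cC kC where C: "cC \<noteq> 0"
      "wronskian (map herm (F @ [b])) = smult cC ([:0,1:] ^ kC * hermR (F @ [b]))"
    using herm_wronskian_factorization[OF sorted(2)] by blast
  obtain cD kD where D: "cD \<noteq> 0"
      "wronskian (map herm (F @ [a, b])) = smult cD ([:0,1:] ^ kD * hermR (F @ [a, b]))"
    using herm_wronskian_factorization[OF sorted(3)] by blast
  have "hermR (F @ [a, b]) \<noteq> 0" using hermP_factorization(2)[OF sorted(3)] by auto
  then have "wronskian (map herm F @ [herm a, herm b]) \<noteq> 0" using D by simp
  from wronskian_jacobi[OF this] have jacobi: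
    "wronskian (map herm F) * wronskian (map herm (F @ [a, b]))
      = wronskian (map herm (F @ [a])) * pderiv (wronskian (map herm (F @ [b])))
        - pderiv (wronskian (map herm (F @ [a]))) * wronskian (map herm (F @ [b]))"
    by simp
  have "p dvd wronskian (map herm (F @ [a, b]))"
    using D(2) \<open>p dvd hermR (F @ [a, b])\<close> by (simp add: dvd_smult)
  with irreducible_dvd_of_jacobi_identity[OF irr p0 jacobi _ B(2,1)]
  have "p dvd wronskian (map herm (F @ [b]))" by blast
  then have "p dvd [:0,1:] ^ kC * hermR (F @ [b])"
    using C by (simp add: dvd_smult_iff)
  then have "p dvd hermR (F @ [b])"
    using irreducible_not_dvd_X_power[OF irr p0] prime_elem_dvd_mult_iff
      prime_elem_iff_irreducible irr by blast
  then show ?thesis unfolding p_def .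
qed

theorem mainTheorem19:
  fixes ns :: "nat list" and r :: nat
  assumes "length ns = r" and "r \<ge> 2"
    and "sorted_wrt (<) ns"
    and "irreducible (hermR (butlast ns))"
    and "hermR (butlast ns) dvd hermR ns"
  shows "hermR (butlast ns) dvd hermR (take (r - 2) ns @ [last ns])"
proof -
  obtain F a b where ns: "ns = F @ [a, b]"
    using assms(1,2) by (metis append.left_neutral append_Cons append_assoc impossible_Cons
      length_Cons list.size(3) not_numeral_le_zero numeral_2_eq_2 rev_exhaust)
  have "butlast ns = F @ [a]" and "take (r - 2) ns @ [last ns] = F @ [b]"
    using assms(1) unfolding ns by (simp_all add: butlast_append)
  moreover have "hermR (F @ [a]) dvd hermR (F @ [b])"
    using irreducible_hermR_dvd_swap_last assms(3-5) \<open>butlast ns = F @ [a]\<close>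
    unfolding ns by simp
  ultimately show ?thesis by simp
qed

end
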